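(* Let $q$ be a prime with $q \ge 7$, and let \[ H_2(r,s) = r^2 + (6s^2 - 4s^3 - 4s)\,r + s^4 \in \mathbb F_q[r,s]. \] Then the set $\mathfrak P = \{(r,s) \in \mathbb F_q^2 : r \notin\{0,1\},\ s\notin\{0,1\},\ H_2(r,s)=0\}$ has exactly $q-5$ elements.
   Context: Geometric meaning (not needed for the statement): for $\alpha \in \mathbb F_q\setminus\{0,1\}$ let $C_\alpha$ be the nonsingular conic $\alpha xy + (1-\alpha)xz - yz = 0$, the members of the pencil through $[1,0,0],[0,1,0],[0,0,1],[1,1,1]$. By Cayley's criterion, the pair $(C_r,C_s)$ satisfies the Poncelet triangle condition exactly when $H_2(r,s)=0$, so $\mathfrak P$ is the set of such pairs in this pencil. *)

theory Defs
  imports "HOL-Computational_Algebra.Primes"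
begin

definition H2 :: "'a::comm_ring_1 \<Rightarrow> 'a \<Rightarrow> 'a" where
  "H2 r s = r^2 + (6 * s^2 - 4 * s^3 - 4 * s) * r + s^4"

definition poncelet_set :: "('a::comm_ring_1 \<times> 'a) set" where
  "poncelet_set = {(r, s). r \<notin> {0, 1} \<and> s \<notin> {0, 1} \<and> H2 r s = 0}"

end

theory Submission
  imports Defs "HOL-Number_Theory.Residues"
begin

text \<open>As a quadratic in \<open>r\<close>,
  \<open>H2 r s = (r - c s)^2 - (2 s (s - 1))^2 (s^2 - s + 1)\<close> with \<open>c s = s (2 s^2 - 3 s + 2)\<close>.
  So for \<open>s \<notin> {0, 1}\<close> the roots \<open>r\<close> correspond to the points \<open>(s, t)\<close> of the conic
  \<open>t^2 = s^2 - s + 1\<close>, which is rationally parametrised by \<open>u = s + t\<close> through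
  \<open>s (2u - 1) = u^2 - 1\<close>. Away from characteristic 2 and 3 this makes \<open>u\<close> a bijective
  parameter for the whole set, with exactly the five values \<open>0, 1, -1, 2, 1/2\<close> excluded
  (those giving \<open>s \<in> {0, 1}\<close> or a vanishing denominator).\<close>

definition H2_vertex :: "'a::comm_ring_1 \<Rightarrow> 'a" where
  "H2_vertex s = s * (2*s^2 - 3*s + 2)"

lemma H2_difference_of_squares:
  "H2 r s = (r - H2_vertex s)^2 - (2*s*(s - 1))^2 * (s^2 - s + 1)"
  unfolding H2_def H2_vertex_def
  by (simp add: power2_eq_square power3_eq_cube power4_eq_xxxx algebra_simps)

lemma H2_root_left_not_0_1:
  fixes r s :: "'a::idom"
  assumes "H2 r s = 0" "s \<noteq> 0" "s \<noteq> 1"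
  shows "r \<noteq> 0" "r \<noteq> 1"
proof -
  have "H2 0 s = s^4" "H2 1 s = (s - 1)^4"
    unfolding H2_def by (simp_all add: power2_eq_square power3_eq_cube power4_eq_xxxx algebra_simps)
  then show "r \<noteq> 0" "r \<noteq> 1" using assms by auto
qed

lemma conic_iff_square:
  fixes s u :: "'a::comm_ring_1"
  shows "s * (2*u - 1) = u^2 - 1 \<longleftrightarrow> (u - s)^2 = s^2 - s + 1"
proof -
  have "(u - s)^2 - (s^2 - s + 1) = u^2 - 1 - s * (2*u - 1)"
    by (simp add: power2_eq_square algebra_simps)
  then show ?thesis by (metis eq_iff_diff_eq_0)
qed

lemma conic_vertex_identity:
  fixes s u :: "'a::comm_ring_1"
  assumes "s * (2*u - 1) = u^2 - 1"
  shows "(u + 1) * (u - 1)^3 = (2*u - 1) * (H2_vertex s + 2*s*(s - 1)*(u - s))"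
proof -
  have "(2*u - 1) * (H2_vertex s + 2*s*(s - 1)*(u - s))
        = (s * (2*u - 1)) * (s * (2*u - 1) - 2*u + 2)"
    unfolding H2_vertex_def by (simp add: power2_eq_square algebra_simps)
  also have "\<dots> = (u^2 - 1) * (u^2 - 2*u + 1)" by (simp only: assms) (simp add: algebra_simps)
  also have "\<dots> = (u + 1) * (u - 1)^3" by (simp add: power2_eq_square power3_eq_cube algebra_simps)
  finally show ?thesis by simp
qed

lemma conic_exceptional:
  fixes s u :: "'a::field"
  assumes two: "(2::'a) \<noteq> 0" and three: "(3::'a) \<noteq> 0"
    and conic: "s * (2*u - 1) = u^2 - 1"
  shows "2*u - 1 \<noteq> 0" and "s \<in> {0, 1} \<longleftrightarrow> u \<in> {0, 1, -1, 2}"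
proof -
  show "2*u - 1 \<noteq> 0"
  proof
    assume "2*u - 1 = 0"
    moreover have "u^2 - 1 = 0" using \<open>2*u - 1 = 0\<close> conic by simp
    moreover have "(3::'a) = (2*u - 1) * (2*u + 1) - 4 * (u^2 - 1)"
      by (simp add: power2_eq_square algebra_simps)
    ultimately have "(3::'a) = 0" by simp
    with three show False by simp
  qed
  then have "s = 0 \<longleftrightarrow> u^2 - 1 = 0" "s = 1 \<longleftrightarrow> u^2 - 1 - (2*u - 1) = 0"
    unfolding conic[symmetric] by simp_all
  moreover have "u^2 - 1 = (u - 1) * (u + 1)" "u^2 - 1 - (2*u - 1) = u * (u - 2)"
    by (simp_all add: power2_eq_square algebra_simps)
  ultimately have "s = 0 \<longleftrightarrow> (u - 1) * (u + 1) = 0" "s = 1 \<longleftrightarrow> u * (u - 2) = 0"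
    by metis+
  then show "s \<in> {0, 1} \<longleftrightarrow> u \<in> {0, 1, -1, 2}"
    by (auto simp: eq_neg_iff_add_eq_0)
qed

definition poncelet_param :: "'a::field \<Rightarrow> 'a \<times> 'a" where
  "poncelet_param u = ((u + 1) * (u - 1)^3 / (2*u - 1), (u^2 - 1) / (2*u - 1))"

definition poncelet_param_inv :: "'a::field \<Rightarrow> 'a \<Rightarrow> 'a" where
  "poncelet_param_inv r s = s + (r - H2_vertex s) / (2*s*(s - 1))"

lemma poncelet_param_eq:
  fixes s u :: "'a::field"
  assumes "s * (2*u - 1) = u^2 - 1" and "2*u - 1 \<noteq> 0"
  shows "poncelet_param u = (H2_vertex s + 2*s*(s - 1)*(u - s), s)"
  using conic_vertex_identity[OF assms(1)] assms
  unfolding poncelet_param_def by (simp add: field_simps)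

lemma poncelet_param_on_conic:
  fixes u :: "'a::field"
  assumes "(2::'a) \<noteq> 0" "(3::'a) \<noteq> 0" and u: "u \<notin> {0, 1, -1, 2, 1/2}"
  obtains s where "poncelet_param u = (H2_vertex s + 2*s*(s - 1)*(u - s), s)"
    and "s * (2*u - 1) = u^2 - 1" and "s \<noteq> 0" and "s \<noteq> 1"
proof -
  define s where "s = (u^2 - 1) / (2*u - 1)"
  have nz: "2*u - 1 \<noteq> 0" using u assms(1) by (auto simp: field_simps)
  then have conic: "s * (2*u - 1) = u^2 - 1" unfolding s_def by simp
  have "s \<noteq> 0" "s \<noteq> 1" using conic_exceptional(2)[OF assms(1,2) conic] u by auto
  with poncelet_param_eq[OF conic nz] conic show thesis by (rule that)
qed

lemma poncelet_param_in_poncelet_set: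
  fixes u :: "'a::field"
  assumes "(2::'a) \<noteq> 0" "(3::'a) \<noteq> 0" and "u \<notin> {0, 1, -1, 2, 1/2}"
  shows "poncelet_param u \<in> poncelet_set"
proof -
  obtain s where param: "poncelet_param u = (H2_vertex s + 2*s*(s - 1)*(u - s), s)"
    and conic: "s * (2*u - 1) = u^2 - 1" and s01: "s \<noteq> 0" "s \<noteq> 1"
    using poncelet_param_on_conic[OF assms] .
  define r where "r = H2_vertex s + 2*s*(s - 1)*(u - s)"
  have "H2 r s = 0"
    using conic_iff_square[THEN iffD1, OF conic]
    unfolding H2_difference_of_squares r_def by (simp add: power_mult_distrib)
  with s01 H2_root_left_not_0_1 show ?thesis
    unfolding param[folded r_def] poncelet_set_def by auto
qed

lemma poncelet_param_inv_param:
  fixes u :: "'a::field"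
  assumes "(2::'a) \<noteq> 0" "(3::'a) \<noteq> 0" and "u \<notin> {0, 1, -1, 2, 1/2}"
  shows "case_prod poncelet_param_inv (poncelet_param u) = u"
proof -
  obtain s where param: "poncelet_param u = (H2_vertex s + 2*s*(s - 1)*(u - s), s)"
    and "s \<noteq> 0" "s \<noteq> 1"
    using poncelet_param_on_conic[OF assms] .
  then have "2*s*(s - 1) \<noteq> 0" using assms(1) by simp
  then show ?thesis unfolding param poncelet_param_inv_def by simp
qed

lemma poncelet_param_inv_on_conic:
  fixes r s :: "'a::field"
  assumes "(2::'a) \<noteq> 0" and H: "H2 r s = 0" and "s \<noteq> 0" "s \<noteq> 1"
  defines "u \<equiv> poncelet_param_inv r s"
  shows "s * (2*u - 1) = u^2 - 1" and "r = H2_vertex s + 2*s*(s - 1)*(u - s)"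
proof -
  have c: "2*s*(s - 1) \<noteq> 0" using assms(1,3,4) by simp
  then show r: "r = H2_vertex s + 2*s*(s - 1)*(u - s)"
    unfolding u_def poncelet_param_inv_def by simp
  have "(2*s*(s - 1))^2 * (u - s)^2 = (2*s*(s - 1))^2 * (s^2 - s + 1)"
    using H unfolding H2_difference_of_squares by (subst (asm) r) (simp add: power_mult_distrib)
  then have "(u - s)^2 = s^2 - s + 1" using c by simp
  then show "s * (2*u - 1) = u^2 - 1" by (simp add: conic_iff_square)
qed

lemma poncelet_param_bij:
  assumes "(2::'a::field) \<noteq> 0" "(3::'a) \<noteq> 0"
  shows "bij_betw poncelet_param (UNIV - {0, 1, -1, 2, 1/2}) (poncelet_set :: ('a \<times> 'a) set)"
proof (rule bij_betw_byWitness[where f' = "case_prod poncelet_param_inv"])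
  show "\<forall>u \<in> UNIV - {0, 1, -1, 2, 1/2 :: 'a}. case_prod poncelet_param_inv (poncelet_param u) = u"
  proof
    fix u :: 'a
    assume "u \<in> UNIV - {0, 1, -1, 2, 1/2}"
    then have "u \<notin> {0, 1, -1, 2, 1/2}" by blast
    then show "case_prod poncelet_param_inv (poncelet_param u) = u"
      by (rule poncelet_param_inv_param[OF assms])
  qed
  show "poncelet_param ` (UNIV - {0, 1, -1, 2, 1/2 :: 'a}) \<subseteq> poncelet_set"
  proof (rule image_subsetI)
    fix u :: 'a
    assume "u \<in> UNIV - {0, 1, -1, 2, 1/2}"
    then have "u \<notin> {0, 1, -1, 2, 1/2}" by blast
    then show "poncelet_param u \<in> poncelet_set"
      by (rule poncelet_param_in_poncelet_set[OF assms])
  qed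
  have inv: "poncelet_param (case_prod poncelet_param_inv p) = p
      \<and> case_prod poncelet_param_inv p \<in> UNIV - {0, 1, -1, 2, 1/2 :: 'a}"
    if "p \<in> poncelet_set" for p :: "'a \<times> 'a"
  proof -
    obtain r s where p: "p = (r, s)" by (cases p)
    have rs: "H2 r s = 0" "s \<noteq> 0" "s \<noteq> 1" using that unfolding p poncelet_set_def by auto
    note conic = poncelet_param_inv_on_conic[OF assms(1) rs]
    note exc = conic_exceptional[OF assms conic(1)]
    have "poncelet_param_inv r s \<notin> {0, 1, -1, 2}" using exc(2) rs(2,3) by blast
    moreover have "poncelet_param_inv r s \<noteq> 1/2"
    proof
      assume "poncelet_param_inv r s = 1/2"
      with exc(1) assms(1) show False by simp
    qed
    moreover have "poncelet_param (poncelet_param_inv r s) = (r, s)"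
      using poncelet_param_eq[OF conic(1) exc(1)] unfolding conic(2)[symmetric] .
    ultimately show ?thesis unfolding p by simp
  qed
  show "\<forall>p \<in> poncelet_set :: ('a \<times> 'a) set. poncelet_param (case_prod poncelet_param_inv p) = p"
    using inv by (intro ballI) (rule conjunct1)
  show "case_prod poncelet_param_inv ` poncelet_set \<subseteq> UNIV - {0, 1, -1, 2, 1/2 :: 'a}"
    using inv by (intro image_subsetI) (rule conjunct2)
qed

lemma card_exceptional_params:
  assumes "(2::'a::field) \<noteq> 0" "(3::'a) \<noteq> 0"
  shows "card {0, 1, -1, 2, 1/2 :: 'a} = 5"
proof -
  have "(2::'a) - 1 = 1" "(4::'a) - 1 = 3" by simp_all
  then have "(2::'a) \<noteq> 1" "(4::'a) \<noteq> 1" using assms(2) by (metis one_neq_zero diff_self)+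
  then have "(1::'a) \<noteq> 2" "(1::'a) \<noteq> -1" "(-1::'a) \<noteq> 2"
    "(0::'a) \<noteq> 1/2" "(1::'a) \<noteq> 1/2" "(-1::'a) \<noteq> 1/2" "(2::'a) \<noteq> 1/2"
    using assms by (auto simp: field_simps)
  then show ?thesis using assms by auto
qed

lemma CHAR_eq_prime_card:
  assumes "prime (card (UNIV :: 'a::{field, finite} set))"
  shows "CHAR('a) = card (UNIV :: 'a set)"
  using assms CHAR_dvd_CARD[where 'a = 'a] CHAR_not_1[where 'a = 'a]
  by (auto simp: prime_nat_iff)

lemma of_nat_neq_0_below_prime_card:
  assumes "prime (card (UNIV :: 'a::{field, finite} set))" "0 < n" "n < card (UNIV :: 'a set)"
  shows "(of_nat n :: 'a) \<noteq> 0"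
proof
  assume "(of_nat n :: 'a) = 0"
  then have "card (UNIV :: 'a set) dvd n"
    by (simp add: of_nat_eq_0_iff_char_dvd CHAR_eq_prime_card[OF assms(1)])
  with assms(2,3) show False by (auto dest: dvd_imp_le)
qed

theorem mainTheorem2:
  fixes q :: nat
  assumes "prime q" and "q \<ge> 7"
    and "card (UNIV :: 'a::{field, finite} set) = q"
  shows "card (poncelet_set :: ('a \<times> 'a) set) = q - 5"
proof -
  have "(of_nat n :: 'a) \<noteq> 0" if "0 < n" "n < q" for n
    using of_nat_neq_0_below_prime_card that assms(1,3) by blast
  from this[of 2] this[of 3] have char: "(2::'a) \<noteq> 0" "(3::'a) \<noteq> 0"
    using assms(2) by simp_all
  have "card (poncelet_set :: ('a \<times> 'a) set) = card (UNIV - {0, 1, -1, 2, 1/2 :: 'a})"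
    using bij_betw_same_card[OF poncelet_param_bij[OF char]] by simp
  also have "\<dots> = q - 5"
    using card_exceptional_params[OF char] assms(3) by (simp add: card_Diff_subset)
  finally show ?thesis .
qed

end
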